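(* Let $\mathbb{T}$ be the Tribonacci sequence and, for $n\ge1$, let $C(n)$ be the number of distinct nonempty words $\omega$ such that $\omega\omega\omega$ is a factor of $\mathbb{T}[1,n]$. Then $C(n)=0$ for $n\leq57$. For $n\geq58$, let $m$ be such that $t_{m-1}+2t_{m-4}\leq n<t_{m}+2t_{m-3}$; then $m\geq7$ and \begin{equation*} C(n)= \begin{cases} n-\frac{1}{2}(4t_{m-1}-t_{m-2}-3t_{m-3}+m-6),&n\leq\frac{3t_{m-1}-t_{m-3}-3}{2};\\ \frac{1}{2}(t_{m-5}+t_{m-6}-m+3),&\text{otherwise}. \end{cases} \end{equation*}
   Context: The Tribonacci sequence $\mathbb{T}=x_1x_2x_3\cdots$ is the fixed point (infinite word starting with $a$) of the substitution $\sigma(a)=ab$, $\sigma(b)=ac$, $\sigma(c)=a$ over $\{a,b,c\}$. For $n\ge1$, $\mathbb{T}[1,n]=x_1\cdots x_n$ is its prefix of length $n$. The Tribonacci numbers are $t_m=|\sigma^m(a)|$ for $m\ge0$, with $t_{-2}=0$, $t_{-1}=1$; thus $t_0=1,t_1=2,t_2=4$ and $t_m=t_{m-1}+t_{m-2}+t_{m-3}$. *)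

theory Defs
  imports Complex_Main "HOL-Library.Sublist"
begin

datatype letter = La | Lb | Lc

fun sig :: "letter \<Rightarrow> letter list" where
  "sig La = [La, Lb]"
| "sig Lb = [La, Lc]"
| "sig Lc = [La]"

definition sigma :: "letter list \<Rightarrow> letter list" where
  "sigma w = concat (map sig w)"

text \<open>Tribonacci numbers t_m = |sigma^m(a)| for m >= 0, with t_(-2) = 0, t_(-1) = 1
  (values below -2 are never used; set to 0).\<close>
definition trib :: "int \<Rightarrow> nat" where
  "trib k = (if k \<ge> 0 then length ((sigma ^^ nat k) [La])
             else if k = -1 then 1 else 0)"

text \<open>The i-th letter (0-based) of the fixed point of sigma starting with a:
  sigma^k(a) is a prefix of sigma^(k+1)(a) and has length > i for k = Suc i.\<close>
definition trib_word :: "nat \<Rightarrow> letter" where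
  "trib_word i = (sigma ^^ Suc i) [La] ! i"

definition trib_prefix :: "nat \<Rightarrow> letter list" where
  "trib_prefix n = map trib_word [0..<n]"

definition cube_count :: "nat \<Rightarrow> nat" where
  "cube_count n = card {w. w \<noteq> [] \<and> sublist (w @ w @ w) (trib_prefix n)}"

end

theory Submission
  imports Defs
begin

text \<open>Every letter \<open>a\<close> of \<open>T = \<sigma>(T)\<close> begins the image \<open>\<sigma>(x\<^sub>m)\<close> of a letter of \<open>T\<close>, and \<open>x\<^sub>m\<close>
  can be read off from the letter following that \<open>a\<close>. Hence a stretch of \<open>T\<close> with period
  \<open>p \<ge> 2\<close> desubstitutes to a stretch with a smaller period, and by induction on the period every
  maximal repetition of length at least \<open>3p - 1\<close> turns out to be an occurrence of \<open>u\<^sub>k\<close>, where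
  \<open>u\<^sub>0 = aa\<close> and \<open>u\<^sub>k\<^sub>+\<^sub>1 = \<sigma>(u\<^sub>k)a\<close>: its period is \<open>t\<^sub>k\<close>, and it occurs first right
  after the prefix \<open>\<sigma>\<^sup>k(abacab)\<close>. So the cubes of period \<open>t\<^sub>k\<close> are exactly those whose root
  is one of the \<open>|u\<^sub>k| + 1 - 3t\<^sub>k\<close> factors of length \<open>t\<^sub>k\<close> at offsets \<open>d\<close> of \<open>u\<^sub>k\<close> that leave
  room for three periods; these roots are pairwise distinct, and the \<open>d\<close>-th first appears in
  the prefix of length \<open>|\<sigma>\<^sup>k(abacab)| + 3t\<^sub>k + d\<close>.\<close>

section \<open>The words \<open>\<sigma>\<^sup>n(a)\<close>\<close>

lemma sigma_Nil [simp]: "sigma [] = []"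
  by (simp add: sigma_def)

lemma sigma_Cons [simp]: "sigma (c # w) = sig c @ sigma w"
  by (simp add: sigma_def)

lemma sigma_append [simp]: "sigma (v @ w) = sigma v @ sigma w"
  by (simp add: sigma_def)

lemma sigma_pow_append: "(sigma ^^ k) (v @ w) = (sigma ^^ k) v @ (sigma ^^ k) w"
  by (induction k) auto

lemma sigma_pow_nonempty: "w \<noteq> [] \<Longrightarrow> (sigma ^^ n) w \<noteq> []"
proof (induction n)
  case (Suc n)
  then obtain c r where "(sigma ^^ n) w = c # r" by (meson list.exhaust)
  then show ?case by (cases c) auto
qed simp

definition tword :: "nat \<Rightarrow> letter list" where
  "tword n = (sigma ^^ n) [La]"

definition tlen :: "nat \<Rightarrow> nat" where
  "tlen n = length (tword n)"

lemma sigma_pow_Suc_single: "(sigma ^^ Suc n) [c] = (sigma ^^ n) (sig c)"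
  by (simp add: funpow_Suc_right del: funpow.simps)

lemma tword_Suc: "tword (Suc n) = tword n @ (sigma ^^ n) [Lb]"
  using sigma_pow_Suc_single[of n La] sigma_pow_append[of n "[La]" "[Lb]"] by (simp add: tword_def)

lemma sigma_pow_Suc_b: "(sigma ^^ Suc n) [Lb] = tword n @ (sigma ^^ n) [Lc]"
  using sigma_pow_Suc_single[of n Lb] sigma_pow_append[of n "[La]" "[Lc]"] by (simp add: tword_def)

lemma sigma_pow_Suc_c: "(sigma ^^ Suc n) [Lc] = tword n"
  using sigma_pow_Suc_single[of n Lc] by (simp add: tword_def)

lemma tlen_rec: "tlen (n + 3) = tlen (n + 2) + tlen (n + 1) + tlen n"
  using tword_Suc[of "n + 2"] sigma_pow_Suc_b[of "n + 1"] sigma_pow_Suc_c[of n]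
  by (simp add: tlen_def eval_nat_numeral)

lemma tlen_0: "tlen 0 = 1"
  by (simp add: tlen_def tword_def)

lemma prefix_tword: "m \<le> n \<Longrightarrow> prefix (tword m) (tword n)"
proof (induction n rule: dec_induct)
  case (step n)
  then show ?case using tword_Suc[of n] by (metis prefix_append)
qed simp

lemma tlen_less_Suc: "tlen n < tlen (Suc n)"
  using tword_Suc[of n] sigma_pow_nonempty[of "[Lb]" n] by (simp add: tlen_def)

lemma strict_mono_tlen: "strict_mono tlen"
  using tlen_less_Suc by (simp add: strict_mono_Suc_iff)

lemma tlen_ge: "Suc n \<le> tlen n"
  by (induction n) (use tlen_0 tlen_less_Suc in \<open>auto simp: Suc_le_eq less_trans_Suc\<close>)

lemma trib_word_eq_tword_nth: "i < tlen n \<Longrightarrow> trib_word i = tword n ! i"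
proof -
  assume i: "i < tlen n"
  have i': "i < tlen (Suc i)" using tlen_ge[of "Suc i"] by simp
  have "tword (Suc i) ! i = tword n ! i"
  proof (cases "Suc i \<le> n")
    case True
    then obtain r where "tword n = tword (Suc i) @ r" using prefix_tword prefixE by metis
    then show ?thesis using i' by (simp add: nth_append tlen_def)
  next
    case False
    then obtain r where "tword (Suc i) = tword n @ r" using prefix_tword prefixE by (metis nat_le_linear)
    then show ?thesis using i by (simp add: nth_append tlen_def)
  qed
  then show ?thesis by (simp add: trib_word_def tword_def)
qed

lemma trib_prefix_eq_take_tword: "m \<le> tlen n \<Longrightarrow> trib_prefix m = take m (tword n)"
  by (rule nth_equalityI) (auto simp: trib_prefix_def trib_word_eq_tword_nth tlen_def)

section \<open>Desubstitution\<close>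

text \<open>Positions are 0-based: \<open>factor i j\<close> is the paper's \<open>T[i + 1, j]\<close>.\<close>

abbreviation factor :: "nat \<Rightarrow> nat \<Rightarrow> letter list" where
  "factor i j \<equiv> map trib_word [i..<j]"

lemma factor_append: "i \<le> j \<Longrightarrow> j \<le> k \<Longrightarrow> factor i j @ factor j k = factor i k"
  by (metis le_add_diff_inverse map_append upt_add_eq_append)

text \<open>As \<open>T = \<sigma>(T)\<close>, \<open>sigma_pos m\<close> is the position at which the image of the letter \<open>m\<close> begins.\<close>

definition sigma_pos :: "nat \<Rightarrow> nat" where
  "sigma_pos m = length (sigma (trib_prefix m))"

lemma sigma_pos_0 [simp]: "sigma_pos 0 = 0"
  by (simp add: sigma_pos_def trib_prefix_def)

lemma sigma_pos_Suc: "sigma_pos (Suc m) = sigma_pos m + length (sig (trib_word m))"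
  by (simp add: sigma_pos_def trib_prefix_def)

lemma trib_prefix_sigma_pos: "trib_prefix (sigma_pos m) = sigma (trib_prefix m)"
proof -
  have e: "trib_prefix m = take m (tword m)"
    using trib_prefix_eq_take_tword tlen_ge[of m] by simp
  obtain r where r: "tword m = trib_prefix m @ r" using e by (metis append_take_drop_id)
  have "tword (Suc m) = sigma (tword m)" by (simp add: tword_def)
  then have ws: "tword (Suc m) = sigma (trib_prefix m) @ sigma r" by (simp add: r)
  have "sigma_pos m \<le> tlen (Suc m)" by (simp add: sigma_pos_def tlen_def ws)
  then have "trib_prefix (sigma_pos m) = take (sigma_pos m) (tword (Suc m))"
    by (rule trib_prefix_eq_take_tword)
  then show ?thesis by (simp add: ws sigma_pos_def)
qed

lemma sigma_pos_less_Suc: "sigma_pos m < sigma_pos (Suc m)"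
  by (cases "trib_word m") (auto simp: sigma_pos_Suc)

lemma strict_mono_sigma_pos: "strict_mono sigma_pos"
  using sigma_pos_less_Suc by (simp add: strict_mono_Suc_iff)

lemma sigma_pos_less_iff [simp]: "sigma_pos m < sigma_pos n \<longleftrightarrow> m < n"
  using strict_mono_less[OF strict_mono_sigma_pos] .

lemma sigma_pos_le_iff [simp]: "sigma_pos m \<le> sigma_pos n \<longleftrightarrow> m \<le> n"
  using strict_mono_less_eq[OF strict_mono_sigma_pos] .

lemma sigma_pos_add: "sigma_pos a + k \<le> sigma_pos (a + k)"
  by (induction k) (use sigma_pos_less_Suc in \<open>auto simp: Suc_le_eq le_less_trans\<close>)

lemma sigma_factor:
  "a \<le> b \<Longrightarrow> factor (sigma_pos a) (sigma_pos b) = sigma (factor a b)"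
proof -
  assume ab: "a \<le> b"
  have split: "trib_prefix y = trib_prefix x @ factor x y" if "x \<le> y" for x y
    using factor_append[of 0 x y] that by (simp add: trib_prefix_def)
  have "trib_prefix (sigma_pos b) = trib_prefix (sigma_pos a) @ sigma (factor a b)"
    using split[OF ab] by (simp add: trib_prefix_sigma_pos)
  moreover have "trib_prefix (sigma_pos b)
      = trib_prefix (sigma_pos a) @ factor (sigma_pos a) (sigma_pos b)"
    using split ab by simp
  ultimately show ?thesis by simp
qed

lemma sigma_pos_eq_add_length:
  "a \<le> b \<Longrightarrow> sigma_pos b = sigma_pos a + length (sigma (factor a b))"
  using sigma_factor[of a b] sigma_pos_le_iff[of a b] by (metis le_add_diff_inverse length_map length_upt)

lemma trib_word_sigma_pos_add:
  "i < length (sig (trib_word m)) \<Longrightarrow> trib_word (sigma_pos m + i) = sig (trib_word m) ! i"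
proof -
  assume i: "i < length (sig (trib_word m))"
  have "factor (sigma_pos m) (sigma_pos (Suc m)) = sig (trib_word m)"
    using sigma_factor[of m "Suc m"] by simp
  moreover have "factor (sigma_pos m) (sigma_pos (Suc m)) ! i = trib_word (sigma_pos m + i)"
    using i by (simp add: sigma_pos_Suc)
  ultimately show ?thesis by simp
qed

lemma trib_word_sigma_pos [simp]: "trib_word (sigma_pos m) = La"
  using trib_word_sigma_pos_add[of 0 m] by (cases "trib_word m") auto

lemma trib_word_after_sigma_pos:
  "trib_word (sigma_pos m + 1) = (case trib_word m of La \<Rightarrow> Lb | Lb \<Rightarrow> Lc | Lc \<Rightarrow> La)"
proof (cases "trib_word m")
  case Lc
  then have "sigma_pos m + 1 = sigma_pos (Suc m)" by (simp add: sigma_pos_Suc)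
  then show ?thesis using Lc by simp
qed (use trib_word_sigma_pos_add[of 1 m] in auto)

lemma trib_word_after_sigma_pos_inj:
  "trib_word (sigma_pos m + 1) = trib_word (sigma_pos m' + 1) \<Longrightarrow> trib_word m = trib_word m'"
  using trib_word_after_sigma_pos[of m] trib_word_after_sigma_pos[of m'] by (auto split: letter.splits)

lemma trib_word_before_sigma_pos:
  "trib_word (sigma_pos (Suc m) - 1) = last (sig (trib_word m))"
  using trib_word_sigma_pos_add[of 1 m] trib_word_sigma_pos_add[of 0 m]
  by (cases "trib_word m") (auto simp: sigma_pos_Suc)

lemma sigma_pos_block: "\<exists>m. sigma_pos m \<le> j \<and> j < sigma_pos (Suc m)"
proof (induction j)
  case 0 then show ?case using sigma_pos_less_Suc[of 0] by (intro exI[of _ 0]) simp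
next
  case (Suc j)
  then obtain m where m: "sigma_pos m \<le> j" "j < sigma_pos (Suc m)" by blast
  show ?case
  proof (cases "Suc j < sigma_pos (Suc m)")
    case True then show ?thesis using m by (intro exI[of _ m]) simp
  next
    case False
    then have "Suc j = sigma_pos (Suc m)" using m by simp
    then show ?thesis using sigma_pos_less_Suc[of "Suc m"] by (intro exI[of _ "Suc m"]) simp
  qed
qed

lemma trib_word_eq_a_iff: "trib_word j = La \<longleftrightarrow> (\<exists>m. j = sigma_pos m)"
proof
  assume a: "trib_word j = La"
  obtain m where m: "sigma_pos m \<le> j" "j < sigma_pos (Suc m)" using sigma_pos_block by blast
  show "\<exists>m. j = sigma_pos m"
  proof (rule ccontr)
    assume "\<nexists>m. j = sigma_pos m"
    then have "j \<noteq> sigma_pos m" by blast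
    then have "j = sigma_pos m + 1" "length (sig (trib_word m)) = 2"
      using m by (cases "trib_word m"; auto simp: sigma_pos_Suc)+
    then show False
      using a trib_word_sigma_pos_add[of 1 m] by (cases "trib_word m") auto
  qed
qed auto

lemma trib_word_neq_a:
  "trib_word j \<noteq> La \<Longrightarrow> 0 < j \<and> trib_word (j - 1) = La \<and> trib_word (Suc j) = La"
proof -
  assume a: "trib_word j \<noteq> La"
  obtain m where m: "sigma_pos m \<le> j" "j < sigma_pos (Suc m)" using sigma_pos_block by blast
  have "j \<noteq> sigma_pos m" using a by auto
  then have "j = sigma_pos m + 1" "Suc j = sigma_pos (Suc m)"
    using m by (cases "trib_word m"; auto simp: sigma_pos_Suc)+
  then show ?thesis using trib_word_sigma_pos[of "Suc m"] trib_word_sigma_pos[of m] by auto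
qed

lemma no_aaa: "\<not> (trib_word j = La \<and> trib_word (j + 1) = La \<and> trib_word (j + 2) = La)"
proof
  assume a: "trib_word j = La \<and> trib_word (j + 1) = La \<and> trib_word (j + 2) = La"
  then obtain m where j: "j = sigma_pos m" using trib_word_eq_a_iff by blast
  have c1: "trib_word m = Lc"
    using a trib_word_after_sigma_pos[of m] j by (simp split: letter.splits)
  then have "j + 1 = sigma_pos (Suc m)" using j by (simp add: sigma_pos_Suc)
  then have "trib_word (Suc m) = Lc"
    using a trib_word_after_sigma_pos[of "Suc m"] by (simp split: letter.splits add: numeral_2_eq_2)
  then show False using trib_word_neq_a[of m] c1 by simp
qed

lemma sigma_pos_add_2: "sigma_pos m + 3 \<le> sigma_pos (m + 2)"
proof -
  have "3 \<le> length (sig (trib_word m)) + length (sig (trib_word (Suc m)))"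
  proof (cases "trib_word m = Lc")
    case True
    then have "trib_word (Suc m) = La" using trib_word_neq_a[of m] by simp
    then show ?thesis using True by simp
  next
    case False
    then have "length (sig (trib_word m)) = 2" by (cases "trib_word m") auto
    then show ?thesis by (cases "trib_word (Suc m)") auto
  qed
  then show ?thesis by (simp add: sigma_pos_Suc numeral_2_eq_2)
qed

text \<open>\<open>per_on a b p\<close>: the factor \<open>T[a, b + p)\<close> has period \<open>p\<close>.\<close>

definition per_on :: "nat \<Rightarrow> nat \<Rightarrow> nat \<Rightarrow> bool" where
  "per_on a b p \<longleftrightarrow> (\<forall>i. a \<le> i \<longrightarrow> i < b \<longrightarrow> trib_word i = trib_word (i + p))"

lemma per_onD: "per_on a b p \<Longrightarrow> a \<le> i \<Longrightarrow> i < b \<Longrightarrow> trib_word i = trib_word (i + p)"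
  by (simp add: per_on_def)

lemma per_on_mono: "per_on a b p \<Longrightarrow> a \<le> a' \<Longrightarrow> b' \<le> b \<Longrightarrow> per_on a' b' p"
  by (simp add: per_on_def)

lemma desubst_shift:
  assumes "trib_word s = La" "trib_word (s + p) = La" "2 \<le> p"
  obtains m0 q where "s = sigma_pos m0" "sigma_pos (m0 + q) = sigma_pos m0 + p" "1 \<le> q" "q < p"
proof -
  obtain m0 m1 where m0: "s = sigma_pos m0" and m1: "s + p = sigma_pos m1"
    using assms(1,2) trib_word_eq_a_iff by metis
  have "sigma_pos m0 < sigma_pos m1" using m0 m1 assms(3) by linarith
  then have lt: "m0 < m1" by simp
  define q where "q = m1 - m0"
  have g0: "sigma_pos (m0 + q) = sigma_pos m0 + p" using lt m0 m1 by (simp add: q_def)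
  have "q < p"
  proof (cases "2 \<le> q")
    case True
    then obtain r where r: "q = r + 2" by (metis le_add_diff_inverse2)
    have "sigma_pos (m0 + 2) + r \<le> sigma_pos (m0 + q)"
      using sigma_pos_add[of "m0 + 2" r] r by (simp add: add.commute add.left_commute)
    then show ?thesis using sigma_pos_add_2[of m0] g0 r by linarith
  qed (use assms(3) in simp)
  moreover have "1 \<le> q" using lt by (simp add: q_def)
  ultimately show thesis using that m0 g0 by blast
qed

text \<open>A letter of \<open>T\<close> is determined by the letter following the \<open>a\<close> that begins its
  image, so a period \<open>p\<close> of the image passes back letter by letter to a shift \<open>q\<close> of the preimage.\<close>

lemma desubst_period_step:
  assumes per: "per_on (sigma_pos m0) B p" and "m0 \<le> m"
    and g: "sigma_pos (m + q) = sigma_pos m + p" and b: "sigma_pos m + 1 < B"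
  shows "trib_word m = trib_word (m + q) \<and> sigma_pos (Suc m + q) = sigma_pos (Suc m) + p"
proof -
  have "sigma_pos m0 \<le> sigma_pos m + 1" using \<open>m0 \<le> m\<close> by (simp add: le_SucI)
  then have "trib_word (sigma_pos m + 1) = trib_word (sigma_pos m + 1 + p)"
    using per_onD[OF per _ b] by blast
  then have eq: "trib_word m = trib_word (m + q)"
    using g trib_word_after_sigma_pos_inj by (metis add.commute add.left_commute)
  then show ?thesis using g by (simp add: sigma_pos_Suc)
qed

lemma desubst_period:
  assumes per: "per_on (sigma_pos m0) B p" and g0: "sigma_pos (m0 + q) = sigma_pos m0 + p"
    and "m0 \<le> m" and "sigma_pos m < B"
  shows "sigma_pos (m + q) = sigma_pos m + p"
  using assms(3,4)
proof (induction m rule: dec_induct)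
  case (step n)
  have "sigma_pos n + 1 < B" using step.prems sigma_pos_less_Suc[of n] by linarith
  then show ?case using desubst_period_step[OF per step.hyps(1)] step by simp
qed (use g0 in simp)

lemma not_eventually_periodic: "1 \<le> p \<Longrightarrow> \<exists>j\<ge>s. trib_word j \<noteq> trib_word (j + p)"
proof (induction p arbitrary: s rule: less_induct)
  case (less p)
  show ?case
  proof (rule ccontr)
    assume "\<not> ?thesis"
    then have per: "per_on s B p" for B unfolding per_on_def by (simp only: not_ex not_le) blast
    show False
    proof (cases "p = 1")
      case True
      have "trib_word s = trib_word (s + 1)" "trib_word (s + 1) = trib_word (s + 2)"
        using per_onD[OF per[of "s + 2"], of s] per_onD[OF per[of "s + 2"], of "s + 1"] True by (simp_all add: add.assoc)
      then show False using no_aaa[of s] trib_word_neq_a[of s] by auto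
    next
      case False
      obtain s' where s': "s \<le> s'" "trib_word s' = La"
      proof (cases "trib_word s = La")
        case False
        then show thesis using that[of "Suc s"] trib_word_neq_a[of s] by simp
      qed (use that in blast)
      have "trib_word (s' + p) = La" using per_onD[OF per[of "Suc s'"] s'(1)] s' by simp
      moreover have "2 \<le> p" using less.prems False by simp
      ultimately obtain m0 q where
        m0: "s' = sigma_pos m0" and g0: "sigma_pos (m0 + q) = sigma_pos m0 + p" and "1 \<le> q" "q < p"
        by (rule desubst_shift[OF s'(2)])
      have "trib_word m = trib_word (m + q)" if "m0 \<le> m" for m
      proof -
        have perB: "per_on (sigma_pos m0) B p" for B
          by (rule per_on_mono[OF per[of B]]) (use s'(1) m0 in simp_all)
        have "sigma_pos (m + q) = sigma_pos m + p"
          using desubst_period[OF perB[of "sigma_pos m + 2"] g0 that] by simp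
        then show ?thesis using desubst_period_step[OF perB[of "sigma_pos m + 2"] that] by simp
      qed
      moreover obtain j where "m0 \<le> j" "trib_word j \<noteq> trib_word (j + q)"
        using less.IH[OF \<open>q < p\<close> \<open>1 \<le> q\<close>, of m0] by blast
      ultimately show False by blast
    qed
  qed
qed

section \<open>Maximal repetitions\<close>

lemma trib_prefix_13: "trib_prefix 13 = [La, Lb, La, Lc, La, Lb, La, La, Lb, La, Lc, La, Lb]"
  using trib_prefix_eq_take_tword[of 13 4] by (simp add: tlen_def tword_def numeral_eq_Suc)

lemma trib_word_initial:
  "trib_word 0 = La" "trib_word 1 = Lb" "trib_word 2 = La" "trib_word 3 = Lc"
  "trib_word 4 = La" "trib_word 5 = Lb" "trib_word 6 = La" "trib_word 7 = La"
proof -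
  have "i < 13 \<Longrightarrow> trib_word i = [La, Lb, La, Lc, La, Lb, La, La, Lb, La, Lc, La, Lb] ! i" for i
    using trib_prefix_13 unfolding trib_prefix_def by (metis add_0 diff_zero nth_map_upt)
  then show "trib_word 0 = La" "trib_word 1 = Lb" "trib_word 2 = La" "trib_word 3 = Lc"
    "trib_word 4 = La" "trib_word 5 = Lb" "trib_word 6 = La" "trib_word 7 = La"
    by simp_all
qed

primrec run_word :: "nat \<Rightarrow> letter list" where
  "run_word 0 = [La, La]"
| "run_word (Suc k) = sigma (run_word k) @ [La]"

text \<open>\<open>T\<close> starts with \<open>abacab aa\<close>; the occurrence of \<open>run_word k\<close> at \<open>run_start k\<close> is the
  image of this occurrence of \<open>aa\<close> under \<open>\<sigma>\<^sup>k\<close>, and \<open>\<sigma>\<^sup>k(abacab) = \<sigma>\<^sup>k\<^sup>+\<^sup>2(a) \<sigma>\<^sup>k\<^sup>+\<^sup>1(a)\<close>.\<close>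

definition run_start :: "nat \<Rightarrow> nat" where
  "run_start k = tlen (k + 2) + tlen (k + 1)"

lemma run_start_0: "run_start 0 = 6"
  by (simp add: run_start_def tlen_def tword_def numeral_eq_Suc)

lemma trib_prefix_run_start: "trib_prefix (run_start k) = tword (k + 2) @ tword (k + 1)"
proof (induction k)
  case 0
  show ?case using trib_prefix_eq_take_tword[of 6 3]
    by (simp add: run_start_def tlen_def tword_def numeral_eq_Suc)
next
  case (Suc k)
  have img: "sigma (trib_prefix (run_start k)) = tword (Suc k + 2) @ tword (Suc k + 1)"
    using Suc by (simp add: tword_def)
  then have "sigma_pos (run_start k) = run_start (Suc k)"
    by (simp add: sigma_pos_def run_start_def tlen_def)
  then show ?case using trib_prefix_sigma_pos[of "run_start k"] img by simp
qed

lemma sigma_pos_run_start: "sigma_pos (run_start k) = run_start (Suc k)"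
  using trib_prefix_run_start[of k]
  by (simp add: sigma_pos_def run_start_def tlen_def tword_def)

lemma run_word_eq_tword_append: "\<exists>r. run_word k = tword k @ r"
proof (induction k)
  case (Suc k)
  then obtain r where "run_word k = tword k @ r" by blast
  then have "run_word (Suc k) = tword (Suc k) @ (sigma r @ [La])" by (simp add: tword_def)
  then show ?case by blast
qed (simp add: tword_def)

lemma take_tlen_run_word: "take (tlen k) (run_word k) = tword k"
  using run_word_eq_tword_append[of k] by (auto simp: tlen_def)

lemma tlen_le_length_run_word: "tlen k \<le> length (run_word k)"
  using run_word_eq_tword_append[of k] by (auto simp: tlen_def)

lemma sigma_pos_shift_run_word:
  assumes "factor s (s + length (run_word k)) = run_word k"
  shows "sigma_pos (s + tlen k) = sigma_pos s + tlen (Suc k)"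
proof -
  have "factor s (s + tlen k) = take (tlen k) (factor s (s + length (run_word k)))"
    using tlen_le_length_run_word[of k] by (simp add: take_map)
  then have "factor s (s + tlen k) = tword k" using assms take_tlen_run_word by simp
  then show ?thesis using sigma_pos_eq_add_length[of s "s + tlen k"] by (simp add: tlen_def tword_def)
qed

text \<open>\<open>cubic_run s l p\<close>: the factor \<open>T[s, s + l)\<close> has period \<open>p\<close>, cannot be extended to either
  side with that period, and has length \<open>l \<ge> 3p - 1\<close>.\<close>

definition cubic_run :: "nat \<Rightarrow> nat \<Rightarrow> nat \<Rightarrow> bool" where
  "cubic_run s l p \<longleftrightarrow> 1 \<le> p \<and> 3 * p \<le> l + 1 \<and> per_on s (s + l - p) p
    \<and> trib_word (s + l - p) \<noteq> trib_word (s + l)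
    \<and> (s = 0 \<or> trib_word (s - 1) \<noteq> trib_word (s - 1 + p))"

lemma cubic_run_starts_with_a:
  assumes "cubic_run s l p"
  shows "trib_word s = La" "trib_word (s + p) = La"
proof -
  have "1 \<le> p" "3 * p \<le> l + 1" "per_on s (s + l - p) p" using assms by (simp_all add: cubic_run_def)
  then have per: "trib_word s = trib_word (s + p)" using per_onD[of s "s + l - p" p s] by simp
  show a: "trib_word s = La"
  proof (rule ccontr)
    assume na: "trib_word s \<noteq> La"
    then have "0 < s" "trib_word (s - 1) = La" using trib_word_neq_a[of s] by auto
    moreover have "trib_word (s + p - 1) = La" using trib_word_neq_a[of "s + p"] na per by simp
    ultimately show False using assms by (simp add: cubic_run_def)
  qed
  then show "trib_word (s + p) = La" using per by simp
qed

lemma cubic_run_period_1: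
  assumes "cubic_run s l 1"
  shows "l = 2 \<and> factor s (s + l) = run_word 0 \<and> run_start 0 \<le> s"
proof -
  have per: "per_on s (s + l - 1) 1" and l2: "2 \<le> l" using assms by (simp_all add: cubic_run_def)
  have s: "trib_word s = La" "trib_word (s + 1) = La" using cubic_run_starts_with_a[OF assms] by auto
  have "l = 2"
  proof (rule ccontr)
    assume "l \<noteq> 2"
    then have "trib_word (s + 1) = trib_word (s + 2)" using per_onD[OF per, of "s + 1"] l2 by simp
    then show False using no_aaa[of s] s by simp
  qed
  moreover have "run_start 0 \<le> s"
  proof (rule ccontr)
    assume "\<not> run_start 0 \<le> s"
    then have "s < 6" by (simp add: run_start_0)
    then have "s \<in> {0, 1, 2, 3, 4, 5}" by auto
    then show False using s trib_word_initial by auto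
  qed
  ultimately show ?thesis using s by (simp add: upt_rec)
qed

lemma desubst_mismatch:
  assumes ge: "sigma_pos (e + q) = sigma_pos e + p"
    and eD: "sigma_pos e < D" "D \<le> sigma_pos (Suc e)" and neq: "trib_word D \<noteq> trib_word (D + p)"
  shows "trib_word e \<noteq> trib_word (e + q)"
proof
  assume eq_e: "trib_word e = trib_word (e + q)"
  show False
  proof (cases "D < sigma_pos (Suc e)")
    case True
    define i where "i = D - sigma_pos e"
    have il: "i < length (sig (trib_word e))" using True eD by (simp add: i_def sigma_pos_Suc)
    have "trib_word D = sig (trib_word e) ! i"
      using trib_word_sigma_pos_add[OF il] eD by (simp add: i_def)
    moreover have "D + p = sigma_pos (e + q) + i" using ge eD by (simp add: i_def)
    then have "trib_word (D + p) = sig (trib_word (e + q)) ! i"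
      using trib_word_sigma_pos_add[of i "e + q"] il eq_e by simp
    ultimately show False using neq eq_e by simp
  next
    case False
    then have "D = sigma_pos (Suc e)" using eD by simp
    moreover have "sigma_pos (Suc e + q) = sigma_pos (Suc e) + p"
      using ge eq_e by (simp add: sigma_pos_Suc)
    ultimately show False using neq trib_word_sigma_pos[of "Suc e + q"] by simp
  qed
qed

lemma desubst_right_end:
  assumes per: "per_on (sigma_pos m0) D p" and g0: "sigma_pos (m0 + q) = sigma_pos m0 + p"
    and D: "sigma_pos m0 < D" and neq: "trib_word D \<noteq> trib_word (D + p)"
  obtains e where "m0 \<le> e" "D = sigma_pos e + 1" "sigma_pos (e + q) = sigma_pos e + p"
    "trib_word e \<noteq> trib_word (e + q)" "per_on m0 e q"
proof -
  have shift: "sigma_pos (m + q) = sigma_pos m + p" if "m0 \<le> m" "sigma_pos m < D" for m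
    using desubst_period[OF per g0 that] .
  have eq: "trib_word m = trib_word (m + q)" if "m0 \<le> m" "sigma_pos m + 1 < D" for m
    using desubst_period_step[OF per that(1) shift that(2)] that by simp
  obtain e where "sigma_pos e \<le> D - 1" "D - 1 < sigma_pos (Suc e)" using sigma_pos_block by blast
  then have eD: "sigma_pos e < D" "D \<le> sigma_pos (Suc e)" using D by auto
  have me: "m0 \<le> e"
  proof (rule ccontr)
    assume "\<not> m0 \<le> e"
    then have "sigma_pos (Suc e) \<le> sigma_pos m0" by simp
    then show False using eD D by linarith
  qed
  have ge: "sigma_pos (e + q) = sigma_pos e + p" using shift[OF me eD(1)] .
  have neq_e: "trib_word e \<noteq> trib_word (e + q)" using desubst_mismatch[OF ge eD neq] .
  have De: "D = sigma_pos e + 1"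
  proof (rule ccontr)
    assume "D \<noteq> sigma_pos e + 1"
    then show False using eq[OF me] neq_e eD by simp
  qed
  have "per_on m0 e q"
    unfolding per_on_def
  proof (intro allI impI)
    fix m assume "m0 \<le> m" "m < e"
    moreover have "sigma_pos m + 1 \<le> sigma_pos e"
      using \<open>m < e\<close> sigma_pos_less_iff Suc_le_eq by (metis Suc_eq_plus1)
    ultimately show "trib_word m = trib_word (m + q)" using eq De by simp
  qed
  with that me De ge neq_e show thesis by blast
qed

lemma desubst_length:
  assumes per: "per_on (sigma_pos m0) D p" and g0: "sigma_pos (m0 + q) = sigma_pos m0 + p"
    and D: "sigma_pos m0 + 2 * p \<le> D + 1" "D = sigma_pos e + 1" and p: "2 \<le> p"
  shows "m0 + 2 * q \<le> e + 1"
proof (rule ccontr)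
  assume "\<not> m0 + 2 * q \<le> e + 1"
  then have le: "e + 2 \<le> m0 + q + q" by simp
  have "sigma_pos (m0 + q) < D" using g0 D p by simp
  then have "sigma_pos (m0 + q + q) = sigma_pos (m0 + q) + p"
    using desubst_period[OF per g0, of "m0 + q"] by simp
  moreover have "sigma_pos (e + 2) \<le> sigma_pos (m0 + q + q)" using le by simp
  moreover have "sigma_pos e + 3 \<le> sigma_pos (e + 2)" by (rule sigma_pos_add_2)
  ultimately show False using g0 D by simp
qed

lemma desubst_left_end:
  assumes g0: "sigma_pos (m0 + q) = sigma_pos m0 + p"
    and left: "sigma_pos m0 = 0 \<or> trib_word (sigma_pos m0 - 1) \<noteq> trib_word (sigma_pos m0 - 1 + p)"
  shows "m0 = 0 \<or> trib_word (m0 - 1) \<noteq> trib_word (m0 - 1 + q)"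
proof (rule ccontr)
  assume "\<not> ?thesis"
  then have "0 < m0" and eq: "trib_word (m0 - 1) = trib_word (m0 - 1 + q)" by auto
  then have "Suc (m0 - 1) = m0" "Suc (m0 - 1 + q) = m0 + q" by auto
  then have "trib_word (sigma_pos m0 - 1) = trib_word (sigma_pos (m0 + q) - 1)"
    using trib_word_before_sigma_pos[of "m0 - 1"] trib_word_before_sigma_pos[of "m0 - 1 + q"] eq
    by simp
  moreover have "0 < sigma_pos m0" using \<open>0 < m0\<close> sigma_pos_less_iff[of 0 m0] by simp
  ultimately show False using g0 left by simp
qed

lemma cubic_run_desubst:
  assumes run: "cubic_run s l p" and p: "2 \<le> p"
  obtains m0 L q where "s = sigma_pos m0" "q < p" "cubic_run m0 L q"
    "s + l = sigma_pos (m0 + L) + 1" "sigma_pos (m0 + q) = sigma_pos m0 + p"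
proof -
  define D where "D = s + l - p"
  have lD: "s + 2 * p \<le> D + 1" "s + l = D + p" using run p by (auto simp: D_def cubic_run_def)
  have per: "per_on s D p" and left: "s = 0 \<or> trib_word (s - 1) \<noteq> trib_word (s - 1 + p)"
    using run by (simp_all add: D_def cubic_run_def)
  have neq: "trib_word D \<noteq> trib_word (D + p)"
    using run by (simp add: cubic_run_def flip: D_def lD(2))
  obtain m0 q where m0: "s = sigma_pos m0" and g0: "sigma_pos (m0 + q) = sigma_pos m0 + p"
    and q: "1 \<le> q" "q < p"
    using desubst_shift[OF cubic_run_starts_with_a[OF run] p] .
  have "sigma_pos m0 < D" using lD m0 p by simp
  obtain e where me: "m0 \<le> e" and De: "D = sigma_pos e + 1"
    and ge: "sigma_pos (e + q) = sigma_pos e + p" and neq_e: "trib_word e \<noteq> trib_word (e + q)"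
    and per_e: "per_on m0 e q"
    by (rule desubst_right_end[OF per[unfolded m0] g0 \<open>sigma_pos m0 < D\<close> neq])
  have len: "m0 + 2 * q \<le> e + 1" using desubst_length[OF per[unfolded m0] g0 _ De p] lD m0 by simp
  define L where "L = e + q - m0"
  have L: "m0 + L - q = e" "m0 + L = e + q" using me by (simp_all add: L_def)
  have "m0 = 0 \<or> trib_word (m0 - 1) \<noteq> trib_word (m0 - 1 + q)"
    using desubst_left_end[OF g0] left m0 by simp
  then have "cubic_run m0 L q" using q len per_e neq_e L by (simp add: cubic_run_def L_def)
  moreover have "s + l = sigma_pos (m0 + L) + 1" using lD De ge L by simp
  ultimately show thesis using that[OF m0 \<open>q < p\<close> _ _ g0] by blast
qed

theorem cubic_run_classification:
  "cubic_run s l p \<Longrightarrow> \<exists>k. p = tlen k \<and> l = length (run_word k)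
     \<and> factor s (s + l) = run_word k \<and> run_start k \<le> s"
proof (induction p arbitrary: s l rule: less_induct)
  case (less p)
  show ?case
  proof (cases "p = 1")
    case True
    then have "l = 2" "factor s (s + l) = run_word 0" "run_start 0 \<le> s"
      using cubic_run_period_1 less.prems by simp_all
    moreover have "p = tlen 0" "l = length (run_word 0)" using True tlen_0 \<open>l = 2\<close> by simp_all
    ultimately show ?thesis by (intro exI[of _ 0] conjI)
  next
    case False
    then have "2 \<le> p" using less.prems by (simp add: cubic_run_def)
    obtain m0 L q where m0: "s = sigma_pos m0" and "q < p" and run: "cubic_run m0 L q"
      and sl: "s + l = sigma_pos (m0 + L) + 1" and g0: "sigma_pos (m0 + q) = sigma_pos m0 + p"
      by (rule cubic_run_desubst[OF less.prems \<open>2 \<le> p\<close>])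
    obtain k where k: "q = tlen k" "L = length (run_word k)"
      "factor m0 (m0 + L) = run_word k" "run_start k \<le> m0"
      using less.IH[OF \<open>q < p\<close> run] by blast
    have "factor s (s + l)
        = factor (sigma_pos m0) (sigma_pos (m0 + L)) @ [trib_word (sigma_pos (m0 + L))]"
      using sl m0 by simp
    also have "\<dots> = run_word (Suc k)" using sigma_factor[of m0 "m0 + L"] k(3) by simp
    finally have w: "factor s (s + l) = run_word (Suc k)" .
    have "p = tlen (Suc k)" using sigma_pos_shift_run_word[of m0 k] k g0 by simp
    moreover have "l = length (run_word (Suc k))" using arg_cong[OF w, of length] by simp
    moreover have "run_start (Suc k) \<le> s" using k(4) m0 by (simp flip: sigma_pos_run_start)
    ultimately show ?thesis using w by blast
  qed
qed

lemma subst_shift: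
  assumes per: "per_on m0 E q" and g0: "sigma_pos (m0 + q) = sigma_pos m0 + p"
    and "m0 \<le> m" "m \<le> E"
  shows "sigma_pos (m + q) = sigma_pos m + p"
  using assms(3,4)
proof (induction m rule: dec_induct)
  case (step n)
  then have "trib_word n = trib_word (n + q)" "sigma_pos (n + q) = sigma_pos n + p"
    using per_onD[OF per step.hyps(1)] by simp_all
  then show ?case by (simp add: sigma_pos_Suc)
qed (use g0 in simp)

lemma subst_period:
  assumes per: "per_on m0 E q" and g0: "sigma_pos (m0 + q) = sigma_pos m0 + p" and "m0 \<le> E"
  shows "per_on (sigma_pos m0) (sigma_pos E + 1) p"
  unfolding per_on_def
proof (intro allI impI)
  fix i assume i1: "sigma_pos m0 \<le> i" and i2: "i < sigma_pos E + 1"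
  show "trib_word i = trib_word (i + p)"
  proof (cases "i = sigma_pos E")
    case True
    then show ?thesis using subst_shift[OF per g0 \<open>m0 \<le> E\<close>] by (metis order.refl trib_word_sigma_pos)
  next
    case False
    then have i3: "i < sigma_pos E" using i2 by simp
    obtain m where m: "sigma_pos m \<le> i" "i < sigma_pos (Suc m)" using sigma_pos_block by blast
    have "sigma_pos m0 < sigma_pos (Suc m)" "sigma_pos m < sigma_pos E" using i1 i3 m by linarith+
    then have mm: "m0 \<le> m" "m < E" by simp_all
    define j where "j = i - sigma_pos m"
    have j: "j < length (sig (trib_word m))" using m by (simp add: j_def sigma_pos_Suc)
    have eq: "trib_word m = trib_word (m + q)" using per_onD[OF per mm] .
    have "i + p = sigma_pos (m + q) + j" using subst_shift[OF per g0 mm(1)] mm m by (simp add: j_def)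
    then show ?thesis
      using trib_word_sigma_pos_add[OF j] trib_word_sigma_pos_add[of j "m + q"] j eq m
      by (simp add: j_def)
  qed
qed

lemma run_word_occurrence:
  "per_on (run_start k) (run_start k + length (run_word k) - tlen k) (tlen k)
   \<and> factor (run_start k) (run_start k + length (run_word k)) = run_word k"
proof (induction k)
  case 0
  have "per_on 6 7 1"
    unfolding per_on_def
  proof (intro allI impI)
    fix i :: nat assume "6 \<le> i" "i < 7"
    then have "i = 6" by simp
    then show "trib_word i = trib_word (i + 1)" using trib_word_initial by simp
  qed
  moreover have "factor 6 8 = [trib_word 6, trib_word 7]" by (simp add: upt_rec)
  ultimately show ?case using trib_word_initial by (simp add: run_start_0 tlen_0)
next
  case (Suc k)
  define s where "s = run_start k"
  define L where "L = length (run_word k)"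
  have per: "per_on s (s + L - tlen k) (tlen k)" and w: "factor s (s + L) = run_word k"
    using Suc by (simp_all add: s_def L_def)
  have tL: "tlen k \<le> L" using tlen_le_length_run_word by (simp add: L_def)
  have g0: "sigma_pos (s + tlen k) = sigma_pos s + tlen (Suc k)"
    using sigma_pos_shift_run_word w by (simp add: L_def)
  have img: "factor (sigma_pos s) (sigma_pos (s + L) + 1) = run_word (Suc k)"
    using sigma_factor[of s "s + L"] w by simp
  have shift: "sigma_pos (s + L) = sigma_pos (s + L - tlen k) + tlen (Suc k)"
    using subst_shift[OF per g0, of "s + L - tlen k"] tL by simp
  have "per_on (sigma_pos s) (sigma_pos (s + L) + 1 - tlen (Suc k)) (tlen (Suc k))"
    using subst_period[OF per g0] tL shift by simp
  moreover have "sigma_pos s + length (run_word (Suc k)) = sigma_pos (s + L) + 1"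
    using sigma_pos_eq_add_length[of s "s + L"] w by simp
  ultimately show ?case using img by (simp add: s_def sigma_pos_run_start)
qed

lemma per_on_extend_right:
  assumes per: "per_on j E p" and p: "1 \<le> p"
  obtains D where "E \<le> D" "per_on j D p" "trib_word D \<noteq> trib_word (D + p)"
proof -
  let ?bad = "\<lambda>d. j \<le> d \<and> trib_word d \<noteq> trib_word (d + p)"
  define D where "D = (LEAST d. ?bad d)"
  have "\<exists>d. ?bad d" using not_eventually_periodic[OF p, of j] by blast
  then have D: "?bad D" unfolding D_def by (rule LeastI_ex)
  have "per_on j D p"
    unfolding per_on_def
  proof (intro allI impI)
    fix i assume "j \<le> i" "i < D"
    then show "trib_word i = trib_word (i + p)" using not_less_Least[of i ?bad] by (simp add: D_def)
  qed
  moreover have "E \<le> D"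
  proof (rule ccontr)
    assume "\<not> E \<le> D"
    then show False using per_onD[OF per, of D] D by simp
  qed
  ultimately show thesis using that D by blast
qed

lemma per_on_extend_left:
  assumes per: "per_on j D p"
  obtains s where "s \<le> j" "per_on s D p" "s = 0 \<or> trib_word (s - 1) \<noteq> trib_word (s - 1 + p)"
proof -
  let ?ext = "\<lambda>s'. s' \<le> j \<and> per_on s' j p"
  define s where "s = (LEAST s'. ?ext s')"
  have "?ext j" by (simp add: per_on_def)
  then have s: "?ext s" unfolding s_def by (rule LeastI)
  have "per_on s D p"
    unfolding per_on_def
  proof (intro allI impI)
    fix i assume "s \<le> i" "i < D"
    then show "trib_word i = trib_word (i + p)"
      using s per by (cases "i < j") (auto simp: per_on_def)
  qed
  moreover have "s = 0 \<or> trib_word (s - 1) \<noteq> trib_word (s - 1 + p)"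
  proof (rule ccontr)
    assume "\<not> ?thesis"
    then have s0: "0 < s" and eq: "trib_word (s - 1) = trib_word (s - 1 + p)" by auto
    have "per_on (s - 1) j p"
      unfolding per_on_def
    proof (intro allI impI)
      fix i assume "s - 1 \<le> i" "i < j"
      then show "trib_word i = trib_word (i + p)"
        using s eq by (cases "i = s - 1") (auto simp: per_on_def)
    qed
    then have "?ext (s - 1)" using s by auto
    then show False using not_less_Least[of "s - 1" ?ext] s0 by (simp add: s_def)
  qed
  ultimately show thesis using that s by blast
qed

lemma periodic_factor_in_run:
  assumes per: "per_on j (j + L - p) p" and p: "1 \<le> p" and L: "3 * p \<le> L + 1"
  obtains k s where "p = tlen k" "s \<le> j" "j + L \<le> s + length (run_word k)" "run_start k \<le> s"
    "factor s (s + length (run_word k)) = run_word k"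
proof -
  obtain D where D: "j + L - p \<le> D" "per_on j D p" "trib_word D \<noteq> trib_word (D + p)"
    by (rule per_on_extend_right[OF per p])
  obtain s where s: "s \<le> j" "per_on s D p" "s = 0 \<or> trib_word (s - 1) \<noteq> trib_word (s - 1 + p)"
    by (rule per_on_extend_left[OF D(2)])
  define l where "l = D + p - s"
  have "cubic_run s l p" using s D p L by (simp add: cubic_run_def l_def)
  then obtain k where "p = tlen k" "l = length (run_word k)"
    "factor s (s + l) = run_word k" "run_start k \<le> s"
    using cubic_run_classification by blast
  moreover have "j + L \<le> s + l" using s D L p by (simp add: l_def)
  ultimately show thesis using that s(1) by blast
qed

section \<open>Tribonacci arithmetic\<close>

lemma nat_induct_3:
  fixes k :: nat
  assumes "P 0" "P 1" "P 2" "\<And>n. P n \<Longrightarrow> P (n + 1) \<Longrightarrow> P (n + 2) \<Longrightarrow> P (n + 3)"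
  shows "P k"
proof (induction k rule: less_induct)
  case (less k)
  show ?case
  proof (cases "k < 3")
    case True
    then have "k = 0 \<or> k = 1 \<or> k = 2" by auto
    then show ?thesis using assms by auto
  next
    case False
    then obtain n where "k = n + 3" by (metis add.commute le_add_diff_inverse not_less)
    then show ?thesis using assms(4) less by simp
  qed
qed

text \<open>\<open>tri k = t\<^sub>k\<^sub>-\<^sub>3\<close>: the Tribonacci numbers shifted so that the index is a natural number,
  starting \<open>0, 0, 1\<close> (i.e. \<open>t\<^sub>-\<^sub>3 = t\<^sub>-\<^sub>2 = 0\<close>, \<open>t\<^sub>-\<^sub>1 = 1\<close>).\<close>

fun tri :: "nat \<Rightarrow> nat" where
  "tri 0 = 0"
| "tri (Suc 0) = 0"
| "tri (Suc (Suc 0)) = 1"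
| "tri (Suc (Suc (Suc n))) = tri (Suc (Suc n)) + tri (Suc n) + tri n"

lemma tri_expand:
  "tri (k + 3) = tri k + tri (k + 1) + tri (k + 2)"
  "tri (k + 4) = tri k + 2 * tri (k + 1) + 2 * tri (k + 2)"
  "tri (k + 5) = 2 * tri k + 3 * tri (k + 1) + 4 * tri (k + 2)"
  "tri (k + 6) = 4 * tri k + 6 * tri (k + 1) + 7 * tri (k + 2)"
  "tri (k + 7) = 7 * tri k + 11 * tri (k + 1) + 13 * tri (k + 2)"
  by (simp_all add: eval_nat_numeral)

lemma tri_mono: "m \<le> n \<Longrightarrow> tri m \<le> tri n"
proof -
  have "tri n \<le> tri (Suc n)" for n by (induction n rule: tri.induct) simp_all
  then show "m \<le> n \<Longrightarrow> tri m \<le> tri n" by (rule lift_Suc_mono_le)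
qed

lemma tri_add_2: "tri k + 1 \<le> tri (k + 2)"
proof (cases k)
  case (Suc j)
  have "1 \<le> tri (j + 2)" using tri_mono[of 2 "j + 2"] by (simp add: numeral_eq_Suc)
  then show ?thesis using Suc tri_expand(1)[of j] by (simp add: numeral_eq_Suc)
qed (simp add: numeral_eq_Suc)

lemma tlen_eq_tri: "tlen k = tri (k + 3)"
proof (induction k rule: nat_induct_3)
  case (4 n)
  then show ?case using tlen_rec[of n] tri_expand(1)[of "n + 3"] by (simp add: ac_simps)
qed (simp_all add: tlen_def tword_def numeral_eq_Suc)

lemma length_sigma: "length (sigma w) = length w + count_list w La + count_list w Lb"
proof (induction w)
  case (Cons c w)
  then show ?case by (cases c) simp_all
qed simp

lemma count_sigma_a: "count_list (sigma w) La = length w"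
proof (induction w)
  case (Cons c w)
  then show ?case by (cases c) simp_all
qed simp

lemma count_sigma_b: "count_list (sigma w) Lb = count_list w La"
proof (induction w)
  case (Cons c w)
  then show ?case by (cases c) simp_all
qed simp

lemma length_run_word_rec:
  "length (run_word (k + 3))
   = length (run_word (k + 2)) + length (run_word (k + 1)) + length (run_word k) + 3"
  by (simp add: eval_nat_numeral length_sigma count_sigma_a count_sigma_b)

lemma length_run_word_tri: "2 * length (run_word k) + 3 = tri (k + 6) + tri k"
proof (induction k rule: nat_induct_3)
  case (4 n)
  then show ?case using length_run_word_rec[of n] by (simp add: eval_nat_numeral)
qed (simp_all add: sigma_def eval_nat_numeral)

text \<open>The cubes of period \<open>t\<^sub>k\<close> are indexed by their offset \<open>d < ncubes k\<close> in the first occurrence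
  of \<open>run_word k\<close>; the \<open>d\<close>-th one first ends at position \<open>first_cube_end k + d\<close>.\<close>

definition ncubes :: "nat \<Rightarrow> nat" where
  "ncubes k = length (run_word k) + 1 - 3 * tlen k"

definition first_cube_end :: "nat \<Rightarrow> nat" where
  "first_cube_end k = run_start k + 3 * tlen k"

lemma ncubes_tri: "3 * tlen k \<le> length (run_word k) + 1" "2 * ncubes k + 1 + tri k = tri (k + 2)"
  using length_run_word_tri[of k] tlen_eq_tri[of k] tri_add_2[of k] tri_expand[of k]
  by (simp_all add: ncubes_def)

lemma ncubes_less_tlen: "ncubes k < tlen k"
  using ncubes_tri(2)[of k] tri_mono[of "k + 2" "k + 3"] tlen_eq_tri[of k] by simp

lemma less_ncubes_iff: "d < ncubes k \<longleftrightarrow> d + 3 * tlen k \<le> length (run_word k)"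
  using ncubes_tri(1)[of k] by (auto simp: ncubes_def)

lemma ncubes_small: "k < 3 \<Longrightarrow> ncubes k = 0"
  by (auto simp: less_Suc_eq numeral_eq_Suc ncubes_def tlen_def tword_def sigma_def)

lemma sum_ncubes: "2 * (\<Sum>k<K. ncubes k) + K = tri (K + 1) + tri K"
proof (induction K)
  case (Suc K)
  then show ?case using ncubes_tri(2)[of K] tri_expand(1)[of K] by (simp add: eval_nat_numeral)
qed simp

lemma length_run_word_less: "j < k \<Longrightarrow> length (run_word j) < 3 * tlen k"
proof -
  assume "j < k"
  then obtain K where K: "k = Suc K" "j \<le> K" by (cases k) auto
  have "length (run_word j) \<le> length (run_word K)"
    using K(2) by (induction K rule: dec_induct) (auto simp: length_sigma)
  then show ?thesis
    using length_run_word_tri[of K] tlen_eq_tri[of k] K tri_expand[of K]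
      tri_mono[of K "K + 1"] tri_mono[of "K + 1" "K + 2"]
    by (simp add: eval_nat_numeral)
qed

lemma first_cube_end_tri: "first_cube_end k = 6 * tri k + 8 * tri (k + 1) + 9 * tri (k + 2)"
proof -
  have "run_start k = tri (k + 5) + tri (k + 4)"
    using tlen_eq_tri[of "k + 2"] tlen_eq_tri[of "k + 1"] by (simp add: run_start_def add.commute)
  then show ?thesis
    using tlen_eq_tri[of k] tri_expand(1,2,3)[of k] unfolding first_cube_end_def by linarith
qed

lemma first_cube_end_Suc_tri:
  "first_cube_end (Suc k) = 9 * tri k + 15 * tri (k + 1) + 17 * tri (k + 2)"
  using first_cube_end_tri[of "Suc k"] tri_expand(1)[of k] by simp

lemma first_cube_end_add_ncubes: "first_cube_end k + ncubes k \<le> first_cube_end (Suc k)"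
  using ncubes_tri(2)[of k] first_cube_end_tri[of k] first_cube_end_Suc_tri[of k] by simp

lemma strict_mono_first_cube_end: "strict_mono first_cube_end"
  unfolding strict_mono_Suc_iff
proof
  fix k
  show "first_cube_end k < first_cube_end (Suc k)"
    using first_cube_end_tri[of k] first_cube_end_Suc_tri[of k] tri_add_2[of k] by linarith
qed

lemma first_cube_end_3: "first_cube_end 3 = 58"
  by (simp add: first_cube_end_tri eval_nat_numeral)

section \<open>Counting cubes\<close>

lemma per_on_iff_factor:
  "per_on a (a + n) p \<longleftrightarrow> factor a (a + n) = factor (a + p) (a + p + n)"
proof -
  have "factor a (a + n) = factor (a + p) (a + p + n)
      \<longleftrightarrow> (\<forall>i<n. trib_word (a + i) = trib_word (a + i + p))"
    by (simp add: list_eq_iff_nth_eq ac_simps)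
  also have "\<dots> \<longleftrightarrow> per_on a (a + n) p"
    unfolding per_on_def
  proof safe
    fix i assume "\<forall>i<n. trib_word (a + i) = trib_word (a + i + p)" "a \<le> i" "i < a + n"
    then show "trib_word i = trib_word (i + p)" by (metis le_add_diff_inverse nat_add_left_cancel_less)
  qed simp
  finally show ?thesis by simp
qed

lemma sublist_trib_prefix_iff:
  "sublist v (trib_prefix n) \<longleftrightarrow> (\<exists>j. j + length v \<le> n \<and> v = factor j (j + length v))"
proof
  assume "sublist v (trib_prefix n)"
  then obtain ps ss where e: "trib_prefix n = ps @ v @ ss" by (auto simp: sublist_def)
  have len: "length ps + length v \<le> n" using arg_cong[OF e, of length] by (simp add: trib_prefix_def)
  have "v = take (length v) (drop (length ps) (trib_prefix n))" using e by simp
  also have "\<dots> = factor (length ps) (length ps + length v)"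
    using len by (simp add: trib_prefix_def drop_map take_map)
  finally show "\<exists>j. j + length v \<le> n \<and> v = factor j (j + length v)" using len by blast
next
  assume "\<exists>j. j + length v \<le> n \<and> v = factor j (j + length v)"
  then obtain j where j: "j + length v \<le> n" "v = factor j (j + length v)" by blast
  then have "trib_prefix n = trib_prefix j @ v @ factor (j + length v) n"
    using factor_append[of 0 j n] factor_append[of j "j + length v" n] by (simp add: trib_prefix_def)
  then show "sublist v (trib_prefix n)" unfolding sublist_def by blast
qed

lemma factor_split_3:
  "factor j (j + 3 * p)
   = factor j (j + p) @ factor (j + p) (j + 2 * p) @ factor (j + 2 * p) (j + 3 * p)"
  "factor j (j + 2 * p) = factor j (j + p) @ factor (j + p) (j + 2 * p)"
  "factor (j + p) (j + p + 2 * p)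
   = factor (j + p) (j + 2 * p) @ factor (j + 2 * p) (j + 3 * p)"
  by (simp_all add: factor_append ac_simps)

lemma triple_eq_factor_iff:
  "w @ w @ w = factor j (j + 3 * length w)
   \<longleftrightarrow> w = factor j (j + length w) \<and> per_on j (j + 2 * length w) (length w)"
proof -
  let ?p = "length w"
  let ?M0 = "factor j (j + ?p)" and ?M1 = "factor (j + ?p) (j + 2 * ?p)"
    and ?M2 = "factor (j + 2 * ?p) (j + 3 * ?p)"
  have "w @ w @ w = factor j (j + 3 * ?p) \<longleftrightarrow> w = ?M0 \<and> w = ?M1 \<and> w = ?M2"
    unfolding factor_split_3(1) by (simp add: append_eq_append_conv)
  moreover have "per_on j (j + 2 * ?p) ?p \<longleftrightarrow> ?M0 = ?M1 \<and> ?M1 = ?M2"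
    unfolding per_on_iff_factor factor_split_3(2,3)[of j ?p] by (simp add: append_eq_append_conv)
  ultimately show ?thesis by auto
qed

lemma cube_factor_iff:
  "(w \<noteq> [] \<and> sublist (w @ w @ w) (trib_prefix n)) \<longleftrightarrow>
   (\<exists>j p. 1 \<le> p \<and> j + 3 * p \<le> n \<and> per_on j (j + 2 * p) p \<and> w = factor j (j + p))"
proof -
  have "length (w @ w @ w) = 3 * length w" by simp
  then have "sublist (w @ w @ w) (trib_prefix n)
      \<longleftrightarrow> (\<exists>j. j + 3 * length w \<le> n \<and> w @ w @ w = factor j (j + 3 * length w))"
    unfolding sublist_trib_prefix_iff by (simp only:)
  then show ?thesis unfolding triple_eq_factor_iff by (auto simp: Suc_le_eq)
qed

definition cube_index :: "nat \<Rightarrow> (nat \<times> nat) set" where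
  "cube_index n = {(k, d). d < ncubes k \<and> first_cube_end k + d \<le> n}"

fun cube_root :: "nat \<times> nat \<Rightarrow> letter list" where
  "cube_root (k, d) = factor (run_start k + d) (run_start k + d + tlen k)"

lemma factor_shift_eq:
  assumes "factor a (a + N) = factor b (b + N)" and "d + P \<le> N"
  shows "factor (a + d) (a + d + P) = factor (b + d) (b + d + P)"
proof -
  have "factor (a + d) (a + d + P) = take P (drop d (factor a (a + N)))"
    using assms(2) by (simp add: drop_map take_map ac_simps)
  also have "\<dots> = factor (b + d) (b + d + P)"
    using assms by (simp add: drop_map take_map ac_simps)
  finally show ?thesis .
qed

lemma cubes_eq_cube_roots:
  "{w. w \<noteq> [] \<and> sublist (w @ w @ w) (trib_prefix n)} = cube_root ` cube_index n"
proof (intro set_eqI iffI)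
  fix w assume "w \<in> {w. w \<noteq> [] \<and> sublist (w @ w @ w) (trib_prefix n)}"
  then obtain j p where h: "1 \<le> p" "j + 3 * p \<le> n" "per_on j (j + 2 * p) p"
    "w = factor j (j + p)"
    using cube_factor_iff by blast
  have "j + 3 * p - p = j + 2 * p" by simp
  then have per: "per_on j (j + 3 * p - p) p" using h(3) by (simp only:)
  have "3 * p \<le> 3 * p + 1" by simp
  then obtain k s where ks: "p = tlen k" "s \<le> j" "j + 3 * p \<le> s + length (run_word k)"
    "run_start k \<le> s" "factor s (s + length (run_word k)) = run_word k"
    by (rule periodic_factor_in_run[OF per h(1)])
  define d where "d = j - s"
  have sd: "s + d = j" using ks(2) by (simp add: d_def)
  have "factor s (s + length (run_word k))
      = factor (run_start k) (run_start k + length (run_word k))"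
    using ks(5) run_word_occurrence[of k] by simp
  then have "factor (s + d) (s + d + p) = factor (run_start k + d) (run_start k + d + p)"
    by (rule factor_shift_eq) (use ks(3) sd in simp)
  then have "w = cube_root (k, d)" using h(4) ks(1) sd by simp
  moreover have "(k, d) \<in> cube_index n"
    using ks h(2) by (simp add: cube_index_def less_ncubes_iff first_cube_end_def d_def) arith
  ultimately show "w \<in> cube_root ` cube_index n" by blast
next
  fix w assume "w \<in> cube_root ` cube_index n"
  then obtain k d where kd: "d < ncubes k" "first_cube_end k + d \<le> n" "w = cube_root (k, d)"
    by (auto simp: cube_index_def)
  have "d + 3 * tlen k \<le> length (run_word k)" using kd(1) less_ncubes_iff by simp
  then have "per_on (run_start k + d) (run_start k + d + 2 * tlen k) (tlen k)"
    by (intro per_on_mono[OF run_word_occurrence[of k, THEN conjunct1]]) simp_all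
  moreover have "1 \<le> tlen k" using tlen_ge[of k] by simp
  moreover have "run_start k + d + 3 * tlen k \<le> n" using kd(2) by (simp add: first_cube_end_def)
  ultimately show "w \<in> {w. w \<noteq> [] \<and> sublist (w @ w @ w) (trib_prefix n)}"
    using cube_factor_iff[of w n] kd(3) by auto
qed

lemma per_on_multiple:
  "per_on b c p \<Longrightarrow> b \<le> x \<Longrightarrow> x + m * p < c + p \<Longrightarrow> trib_word x = trib_word (x + m * p)"
proof (induction m)
  case (Suc m)
  then have "trib_word x = trib_word (x + m * p)" by simp
  also have "\<dots> = trib_word (x + m * p + p)" using per_onD[OF Suc.prems(1), of "x + m * p"] Suc.prems by simp
  finally show ?case by (simp add: ac_simps)
qed simp

lemma per_on_equal_windows:
  assumes per: "per_on S (S + U - p) p" and U: "d' + 3 * p \<le> U" and dd: "d < d'" and p: "1 \<le> p"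
    and eq: "factor (S + d) (S + d + p) = factor (S + d') (S + d' + p)"
  shows "per_on (S + d) (S + d + 3 * p - (d' - d)) (d' - d)"
  unfolding per_on_def
proof (intro allI impI)
  fix i assume i1: "S + d \<le> i" and i2: "i < S + d + 3 * p - (d' - d)"
  define r where "r = i - (S + d)"
  have r3: "r + (d' - d) < 3 * p" using i2 i1 dd by (simp add: r_def)
  have rm: "r = r mod p + (r div p) * p" by simp
  have "trib_word (S + d + r mod p) = trib_word (S + d + r mod p + (r div p) * p)"
    by (rule per_on_multiple[OF per]) (use U dd r3 rm in simp_all)
  then have A: "trib_word i = trib_word (S + d + r mod p)"
    using i1 rm by (simp add: r_def add.assoc)
  have "trib_word (S + d' + r mod p) = trib_word (S + d' + r mod p + (r div p) * p)"
    by (rule per_on_multiple[OF per]) (use U dd r3 rm in simp_all)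
  moreover have "i + (d' - d) = S + d' + r" using i1 dd by (simp add: r_def)
  ultimately have B: "trib_word (i + (d' - d)) = trib_word (S + d' + r mod p)"
    using rm by (simp add: add.assoc)
  have "r mod p < p" using p by simp
  then have "trib_word (S + d + r mod p) = trib_word (S + d' + r mod p)"
    using eq by (metis add_diff_cancel_left' nth_map_upt)
  then show "trib_word i = trib_word (i + (d' - d))" using A B by simp
qed

text \<open>Two cubes of period \<open>p = t\<^sub>k\<close> read at offsets \<open>d < d'\<close> in the run with the same root would
  give the factor of length \<open>3p\<close> at offset \<open>d\<close> the smaller period \<open>d' - d\<close>, so it would lie in
  a run of some period \<open>t\<^sub>j\<close>, \<open>j < k\<close>; but such runs are shorter than \<open>3p\<close>.\<close>

lemma cube_root_inj_shift:
  assumes dd: "d < d'" and d': "d' < ncubes k"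
  shows "cube_root (k, d) \<noteq> cube_root (k, d')"
proof
  assume "cube_root (k, d) = cube_root (k, d')"
  then have eq: "factor (run_start k + d) (run_start k + d + tlen k)
      = factor (run_start k + d') (run_start k + d' + tlen k)" by simp
  have "d' + 3 * tlen k \<le> length (run_word k)" using d' less_ncubes_iff by simp
  moreover have "1 \<le> tlen k" using tlen_ge[of k] by simp
  ultimately have per: "per_on (run_start k + d) (run_start k + d + 3 * tlen k - (d' - d)) (d' - d)"
    using per_on_equal_windows[OF run_word_occurrence[of k, THEN conjunct1] _ dd _ eq] by blast
  have \<delta>: "1 \<le> d' - d" "d' - d < tlen k" using dd d' ncubes_less_tlen[of k] by auto
  then have "3 * (d' - d) \<le> 3 * tlen k + 1" by simp
  then obtain j s where js: "d' - d = tlen j" "s \<le> run_start k + d"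
    "run_start k + d + 3 * tlen k \<le> s + length (run_word j)"
    by (rule periodic_factor_in_run[OF per \<delta>(1)])
  have "j < k" using js(1) \<delta>(2) strict_mono_less[OF strict_mono_tlen] by simp
  then show False using length_run_word_less[of j k] js by simp
qed

lemma inj_on_cube_root: "inj_on cube_root (cube_index n)"
proof (rule inj_onI)
  fix x y assume x: "x \<in> cube_index n" and y: "y \<in> cube_index n" and e: "cube_root x = cube_root y"
  obtain k d k' d' where xy: "x = (k, d)" "y = (k', d')" by fastforce
  have "tlen k = tlen k'" using arg_cong[OF e, of length] by (simp add: xy)
  then have kk: "k = k'" using strict_mono_eq[OF strict_mono_tlen] by simp
  have "d = d'"
    using cube_root_inj_shift[of d d' k] cube_root_inj_shift[of d' d k] x y e
    by (cases d d' rule: linorder_cases) (auto simp: cube_index_def xy kk)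
  then show "x = y" using xy kk by simp
qed

lemma cube_count_eq_card: "cube_count n = card (cube_index n)"
  unfolding cube_count_def cubes_eq_cube_roots using card_image[OF inj_on_cube_root] .

lemma card_cube_index:
  assumes K1: "first_cube_end K \<le> n" and K2: "n < first_cube_end (Suc K)"
  shows "card (cube_index n) = (\<Sum>k<K. ncubes k) + min (ncubes K) (n + 1 - first_cube_end K)"
proof -
  have K: "k \<le> K" if "first_cube_end k \<le> n" for k
    using that K2 strict_mono_less_eq[OF strict_mono_first_cube_end, of "Suc K" k] by linarith
  have "cube_index n = Sigma {..K} (\<lambda>k. {..< min (ncubes k) (n + 1 - first_cube_end k)})"
    using K K1 strict_mono_less_eq[OF strict_mono_first_cube_end]
    by (auto simp: cube_index_def intro: order.trans)
  then have "card (cube_index n) = (\<Sum>k\<le>K. min (ncubes k) (n + 1 - first_cube_end k))"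
    by simp
  also have "\<dots> = (\<Sum>k<K. min (ncubes k) (n + 1 - first_cube_end k))
      + min (ncubes K) (n + 1 - first_cube_end K)"
    by (simp add: lessThan_Suc_atMost[symmetric])
  also have "(\<Sum>k<K. min (ncubes k) (n + 1 - first_cube_end k)) = (\<Sum>k<K. ncubes k)"
  proof (rule sum.cong)
    fix k assume "k \<in> {..<K}"
    then have "first_cube_end (Suc k) \<le> first_cube_end K"
      using strict_mono_less_eq[OF strict_mono_first_cube_end] by simp
    then show "min (ncubes k) (n + 1 - first_cube_end k) = ncubes k"
      using first_cube_end_add_ncubes[of k] K1 by simp
  qed simp
  finally show ?thesis .
qed

lemma cube_index_small: "n \<le> 57 \<Longrightarrow> cube_index n = {}"
proof (rule ccontr)
  assume n: "n \<le> 57" and "cube_index n \<noteq> {}"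
  then obtain k d where kd: "d < ncubes k" "first_cube_end k + d \<le> n" by (auto simp: cube_index_def)
  then have "3 \<le> k" using ncubes_small[of k] by (cases "k < 3") auto
  then have "first_cube_end 3 \<le> first_cube_end k"
    using strict_mono_less_eq[OF strict_mono_first_cube_end] by simp
  then show False using first_cube_end_3 kd n by simp
qed

lemma trib_eq_tri: "trib (int k - 3) = tri k"
proof (cases "3 \<le> k")
  case True
  then have "trib (int k - 3) = tlen (k - 3)" by (simp add: trib_def tlen_def tword_def nat_diff_distrib)
  then show ?thesis using tlen_eq_tri[of "k - 3"] True by simp
next
  case False
  then have "k = 0 \<or> k = 1 \<or> k = 2" by auto
  then show ?thesis by (auto simp: trib_def eval_nat_numeral)
qed

lemma trib_shift: "m = int K + 4 \<Longrightarrow> c \<le> 7 \<Longrightarrow> trib (m - int c) = tri (K + 7 - c)"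
proof -
  assume "m = int K + 4" "c \<le> 7"
  then have "m - int c = int (K + 7 - c) - 3" by simp
  then show ?thesis using trib_eq_tri by simp
qed

lemma trib_le_tri: "z \<le> int w - 3 \<Longrightarrow> trib z \<le> tri w"
proof (cases "z < -3")
  case False
  then have "trib z = tri (nat (z + 3))" using trib_eq_tri[of "nat (z + 3)"] by simp
  moreover assume "z \<le> int w - 3"
  ultimately show ?thesis using tri_mono[of "nat (z + 3)" w] by simp
qed (simp add: trib_def)

lemma trib_window_eq_first_cube_end:
  assumes "m = int K + 4"
  shows "trib (m - 1) + 2 * trib (m - 4) = first_cube_end K"
    "trib m + 2 * trib (m - 3) = first_cube_end (Suc K)"
  using trib_shift[OF assms, of 0] trib_shift[OF assms, of 1] trib_shift[OF assms, of 3]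
    trib_shift[OF assms, of 4] first_cube_end_tri[of K] first_cube_end_Suc_tri[of K] tri_expand[of K]
  by (simp_all add: ac_simps)

lemma first_cube_end_bracket:
  assumes "first_cube_end 0 \<le> n"
  obtains K where "first_cube_end K \<le> n" "n < first_cube_end (Suc K)"
proof -
  have "\<exists>K. n < first_cube_end (Suc K)"
    using strict_mono_imp_increasing[OF strict_mono_first_cube_end, of "Suc n"]
    by (intro exI[of _ n]) simp
  define K where "K = (LEAST K. n < first_cube_end (Suc K))"
  have K: "n < first_cube_end (Suc K)" unfolding K_def by (rule LeastI_ex) fact
  have "first_cube_end K \<le> n"
  proof (cases K)
    case (Suc j)
    then show ?thesis
      using not_less_Least[of j "\<lambda>K. n < first_cube_end (Suc K)"] by (simp add: K_def)
  qed (use assms in simp)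
  with K that show thesis by blast
qed

lemma trib_window_ge_7:
  assumes "58 \<le> n" and "n < trib m + 2 * trib (m - 3)"
  shows "7 \<le> m"
proof (rule ccontr)
  assume "\<not> 7 \<le> m"
  then have "trib m \<le> tri 9" "trib (m - 3) \<le> tri 6" by (simp_all add: trib_le_tri)
  moreover have "tri 9 = 44" "tri 6 = 7" by (simp_all add: eval_nat_numeral)
  ultimately show False using assms by simp
qed

lemma cube_count_closed_form:
  assumes mK: "m = int K + 4" and n: "first_cube_end K \<le> n" "n < first_cube_end (Suc K)"
  shows "real (cube_count n) =
    (if real n \<le> (3 * real (trib (m - 1)) - real (trib (m - 3)) - 3) / 2
     then real n - (4 * real (trib (m - 1)) - real (trib (m - 2))
                     - 3 * real (trib (m - 3)) + real_of_int m - 6) / 2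
     else (real (trib (m - 5)) + real (trib (m - 6)) - real_of_int m + 3) / 2)"
proof -
  let ?a = "real (tri K)" and ?b = "real (tri (K + 1))" and ?d = "real (tri (K + 2))"
  have trib_m: "trib (m - int c) = tri (K + 7 - c)" if "c \<le> 7" for c
    using trib_shift[OF mK that] .
  have t1: "real (trib (m - 1)) = 4 * ?a + 6 * ?b + 7 * ?d"
    using trib_m[of 1] tri_expand(4)[of K] by (simp add: ac_simps)
  have t2: "real (trib (m - 2)) = 2 * ?a + 3 * ?b + 4 * ?d"
    using trib_m[of 2] tri_expand(3)[of K] by (simp add: ac_simps)
  have t3: "real (trib (m - 3)) = ?a + 2 * ?b + 2 * ?d"
    using trib_m[of 3] tri_expand(2)[of K] by (simp add: ac_simps)
  have t5: "real (trib (m - 5)) = ?d" using trib_m[of 5] by simp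
  have t6: "real (trib (m - 6)) = ?b" using trib_m[of 6] by simp
  have S: "2 * real (\<Sum>k<K. ncubes k) = ?a + ?b - real K"
    using arg_cong[OF sum_ncubes[of K], of real] by simp
  have E: "2 * real (ncubes K) = ?d - ?a - 1"
    using arg_cong[OF ncubes_tri(2)[of K], of real] by simp
  have F: "real (first_cube_end K) = 6 * ?a + 8 * ?b + 9 * ?d"
    using arg_cong[OF first_cube_end_tri[of K], of real] by simp
  have "real (cube_count n)
      = real (\<Sum>k<K. ncubes k) + min (real (ncubes K)) (real n + 1 - real (first_cube_end K))"
    using cube_count_eq_card card_cube_index[OF n] n(1) by simp
  then show ?thesis using mK t1 t2 t3 t5 t6 S E F by (simp add: min_def field_simps)
qed

theorem theoremC:
  shows "(\<forall>n::nat. 1 \<le> n \<and> n \<le> 57 \<longrightarrow> cube_count n = 0)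
    \<and> (\<forall>n::nat. n \<ge> 58 \<longrightarrow>
         (\<exists>m::int. trib (m - 1) + 2 * trib (m - 4) \<le> n \<and> n < trib m + 2 * trib (m - 3))
       \<and> (\<forall>m::int. trib (m - 1) + 2 * trib (m - 4) \<le> n \<and> n < trib m + 2 * trib (m - 3) \<longrightarrow>
            m \<ge> 7 \<and>
            real (cube_count n) =
              (if real n \<le> (3 * real (trib (m - 1)) - real (trib (m - 3)) - 3) / 2
               then real n - (4 * real (trib (m - 1)) - real (trib (m - 2))
                               - 3 * real (trib (m - 3)) + real_of_int m - 6) / 2
               else (real (trib (m - 5)) + real (trib (m - 6)) - real_of_int m + 3) / 2)))"
proof (intro conjI allI impI)
  fix n :: nat assume "1 \<le> n \<and> n \<le> 57"
  then show "cube_count n = 0" using cube_count_eq_card cube_index_small by simp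
next
  fix n :: nat assume "58 \<le> n"
  then have "first_cube_end 0 \<le> n"
    using first_cube_end_3 strict_mono_less_eq[OF strict_mono_first_cube_end, of 0 3] by simp
  then obtain K where "first_cube_end K \<le> n" "n < first_cube_end (Suc K)"
    by (rule first_cube_end_bracket)
  then show "\<exists>m::int. trib (m - 1) + 2 * trib (m - 4) \<le> n \<and> n < trib m + 2 * trib (m - 3)"
    using trib_window_eq_first_cube_end[of "int K + 4" K] by (intro exI[of _ "int K + 4"]) simp
next
  fix n :: nat and m :: int
  assume n: "58 \<le> n" and window: "trib (m - 1) + 2 * trib (m - 4) \<le> n \<and> n < trib m + 2 * trib (m - 3)"
  then show m7: "7 \<le> m" using trib_window_ge_7 by blast
  define K where "K = nat (m - 4)"
  have mK: "m = int K + 4" using m7 by (simp add: K_def)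
  then show "real (cube_count n) =
      (if real n \<le> (3 * real (trib (m - 1)) - real (trib (m - 3)) - 3) / 2
       then real n - (4 * real (trib (m - 1)) - real (trib (m - 2))
                       - 3 * real (trib (m - 3)) + real_of_int m - 6) / 2
       else (real (trib (m - 5)) + real (trib (m - 6)) - real_of_int m + 3) / 2)"
    using cube_count_closed_form window trib_window_eq_first_cube_end[OF mK] by simp
qed
end
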